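(* Let $f$ be a non-trivial ABC voting rule that satisfies anonymity, neutrality, consistency, continuity, and independence of losers. Then there is a ballot size $r\in\{1,\dots,m-1\}$ such that $f(A^{x,r})=\{W\in\mathcal W_k:x\in W\}$ and $f(A^{-x,r})=\{W\in\mathcal W_k:x\notin W\}$ for all candidates $x\in\mathcal C$.
   Context: Let $\mathcal C=\{c_1,\dots,c_m\}$ be a set of $m\ge 2$ candidates and $\mathbb N=\{1,2,\dots\}$ the set of potential voters. An approval ballot is a non-empty subset of $\mathcal C$; $\mathcal A$ is the set of all ballots. A profile is a map $A:N_A\to\mathcal A$ for a non-empty finite electorate $N_A\subseteq\mathbb N$; $\mathcal A^*$ is the set of profiles. For disjoint electorates $A+A'$ is the union profile, and $\lambda A$ consists of $\lambda$ copies of $A$ on disjoint voter sets. Fix $k\in\{1,\dots,m-1\}$; $\mathcal W_k$ is the set of $k$-element subsets of $\mathcal C$. An ABC voting rule is a map $f:\mathcal A^*\to2^{\mathcal W_k}\setminus\{\emptyset\}$; it is trivial if $f(A)=\mathcal W_k$ for every profile $A$, and non-trivial otherwise. Anonymity: invariance under renaming voters. Neutrality: $f(\tau(A))=\{\tau(W):W\in f(A)\}$ for every permutation $\tau$ of $\mathcal C$ ($\tau(A)_i=\tau(A_i)$). Consistency: $f(A+A')=f(A)\cap f(A')$ for disjoint $A,A'$ with non-empty intersection of outcomes. Continuity: for all $A,A'$ there is $\lambda\in\mathbb N$ with $f(\lambda A+A')\subseteq f(A)$. Independence of losers: $W\in f(A)$ implies $W\in f(A')$ whenever $N_A=N_{A'}$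 and, for all voters $i$, $A'_i\subseteq A_i$ and $W\cap A'_i=W\cap A_i$. For $x\in\mathcal C$ and $r\in\{1,\dots,m\}$, $A^{x,r}$ is the profile in which every ballot $S\in\mathcal A$ with $|S|=r$ and $x\in S$ is reported by exactly one voter (and no other ballots appear), and $A^{-x,r}$ is the profile in which every ballot $S$ with $|S|=r$ and $x\notin S$ is reported by exactly one voter. *)

theory Defs
  imports Main
begin

text \<open>Candidates form a finite type 'c (m = CARD('c)); potential voters are the
positive naturals. A profile is a partial map from voters to ballots.\<close>

type_synonym 'c profile = "nat \<Rightarrow> 'c set option"

definition is_profile :: "'c profile \<Rightarrow> bool" where
  "is_profile A \<longleftrightarrow> finite (dom A) \<and> dom A \<noteq> {} \<and> 0 \<notin> dom A \<and>
     (\<forall>i\<in>dom A. the (A i) \<noteq> {})"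

definition committees :: "nat \<Rightarrow> 'c set set" where
  "committees k = {W. card W = k}"

definition abc_rule :: "nat \<Rightarrow> ('c profile \<Rightarrow> 'c set set) \<Rightarrow> bool" where
  "abc_rule k f \<longleftrightarrow> (\<forall>A. is_profile A \<longrightarrow> f A \<noteq> {} \<and> f A \<subseteq> committees k)"

definition trivial_rule :: "nat \<Rightarrow> ('c profile \<Rightarrow> 'c set set) \<Rightarrow> bool" where
  "trivial_rule k f \<longleftrightarrow> (\<forall>A. is_profile A \<longrightarrow> f A = committees k)"

definition anonymous :: "('c profile \<Rightarrow> 'c set set) \<Rightarrow> bool" where
  "anonymous f \<longleftrightarrow> (\<forall>A A' \<pi>. is_profile A \<and> is_profile A' \<and> bij_betw \<pi> (dom A) (dom A') \<and>
      (\<forall>i\<in>dom A. A' (\<pi> i) = A i) \<longrightarrow> f A' = f A)"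

definition neutral :: "('c profile \<Rightarrow> 'c set set) \<Rightarrow> bool" where
  "neutral f \<longleftrightarrow> (\<forall>A \<tau>. is_profile A \<and> bij \<tau> \<longrightarrow>
      f (\<lambda>i. map_option (\<lambda>S. \<tau> ` S) (A i)) = (\<lambda>W. \<tau> ` W) ` f A)"

definition consistent :: "('c profile \<Rightarrow> 'c set set) \<Rightarrow> bool" where
  "consistent f \<longleftrightarrow> (\<forall>A A'. is_profile A \<and> is_profile A' \<and> dom A \<inter> dom A' = {} \<and>
      f A \<inter> f A' \<noteq> {} \<longrightarrow> f (A ++ A') = f A \<inter> f A')"

definition copies :: "nat \<Rightarrow> 'c profile \<Rightarrow> 'c profile \<Rightarrow> bool" where
  "copies n A B \<longleftrightarrow> is_profile B \<and> (\<exists>g :: nat \<Rightarrow> nat \<Rightarrow> nat.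
      (\<forall>j<n. inj_on (g j) (dom A)) \<and>
      (\<forall>j<n. \<forall>j'<n. j \<noteq> j' \<longrightarrow> g j ` dom A \<inter> g j' ` dom A = {}) \<and>
      dom B = (\<Union>j<n. g j ` dom A) \<and>
      (\<forall>j<n. \<forall>i\<in>dom A. B (g j i) = A i))"

definition continuous_rule :: "('c profile \<Rightarrow> 'c set set) \<Rightarrow> bool" where
  "continuous_rule f \<longleftrightarrow> (\<forall>A A'. is_profile A \<and> is_profile A' \<longrightarrow>
      (\<exists>n\<ge>1. \<forall>B. copies n A B \<and> dom B \<inter> dom A' = {} \<longrightarrow> f (B ++ A') \<subseteq> f A))"

definition indep_losers :: "('c profile \<Rightarrow> 'c set set) \<Rightarrow> bool" where
  "indep_losers f \<longleftrightarrow> (\<forall>A A' W. is_profile A \<and> is_profile A' \<and> dom A = dom A' \<and>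
      (\<forall>i\<in>dom A. the (A' i) \<subseteq> the (A i) \<and> W \<inter> the (A' i) = W \<inter> the (A i)) \<and>
      W \<in> f A \<longrightarrow> W \<in> f A')"

text \<open>A is (a realisation of) the profile in which each ballot in the set X is
reported by exactly one voter and no other ballots appear.\<close>
definition each_once :: "'c set set \<Rightarrow> 'c profile \<Rightarrow> bool" where
  "each_once X A \<longleftrightarrow> is_profile A \<and> bij_betw (\<lambda>i. the (A i)) (dom A) X"

definition prof_with :: "'c \<Rightarrow> nat \<Rightarrow> 'c profile \<Rightarrow> bool" where
  "prof_with x r A \<longleftrightarrow> each_once {S. card S = r \<and> x \<in> S} A"

definition prof_without :: "'c \<Rightarrow> nat \<Rightarrow> 'c profile \<Rightarrow> bool" where
  "prof_without x r A \<longleftrightarrow> each_once {S. card S = r \<and> x \<notin> S} A"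

end

theory Submission
  imports Defs
begin

text \<open>
  Suppose that no ballot size separates a candidate. Permutations fixing \<open>x\<close> leave the
  profiles \<open>A(x,r)\<close> and \<open>A(-x,r)\<close> invariant, so their outcomes are unions of the two
  classes of committees with and without \<open>x\<close>. Their sum is the fully symmetric profile of
  all \<open>r\<close>-ballots, a complete tie, so by consistency the two outcomes are either disjoint or
  both complete ties. If every winner of \<open>A(x,r)\<close> contained \<open>x\<close>, they would be disjoint
  and \<open>r\<close> would separate \<open>x\<close>. Hence \<open>A(x,r)\<close> has a winner avoiding \<open>x\<close>, and so has
  \<open>A(-x,r)\<close>: it arises from \<open>A(x,r+1)\<close> by deleting \<open>x\<close> from every ballot, and
  independence of losers applies. So the outcomes meet, and every \<open>A(x,r)\<close> is a complete tie.

  Induction on \<open>|S|\<close> then shows that every single ballot \<open>S\<close> is a complete tie: to make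
  \<open>W\<close> win at \<open>S\<close>, shrink the other ballots of a suitable \<open>A(x,|S|)\<close> without changing their
  intersection with \<open>W\<close>, and split the shrunken profile into single ballots by consistency.
  By consistency again every profile is a complete tie.
\<close>

definition map_ballots :: "('c set \<Rightarrow> 'c set) \<Rightarrow> 'c profile \<Rightarrow> 'c profile" where
  "map_ballots g A = (\<lambda>i. map_option g (A i))"

lemma dom_map_ballots [simp]: "dom (map_ballots g A) = dom A"
  by (auto simp: map_ballots_def)

lemma the_map_ballots [simp]: "i \<in> dom A \<Longrightarrow> the (map_ballots g A i) = g (the (A i))"
  by (auto simp: map_ballots_def)

lemma is_profile_map_ballots:
  assumes "is_profile A" and "\<And>i. i \<in> dom A \<Longrightarrow> g (the (A i)) \<noteq> {}"
  shows "is_profile (map_ballots g A)"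
  using assms by (simp add: is_profile_def)

lemma is_profile_single: "0 < i \<Longrightarrow> S \<noteq> {} \<Longrightarrow> is_profile [i \<mapsto> S]"
  by (simp add: is_profile_def)

lemma is_profile_voter_pos: "is_profile A \<Longrightarrow> i \<in> dom A \<Longrightarrow> 0 < i"
  by (auto simp: is_profile_def intro: gr0I)

lemma is_profile_ballot_nonempty: "is_profile A \<Longrightarrow> i \<in> dom A \<Longrightarrow> the (A i) \<noteq> {}"
  by (simp add: is_profile_def)

lemma map_eq_singleton:
  assumes "dom P = {a}"
  shows "P = [a \<mapsto> the (P a)]"
proof
  fix i
  obtain y where "P a = Some y"
    using assms by blast
  then show "P i = [a \<mapsto> the (P a)] i"
    using assms by (cases "i = a") auto
qed

lemma map_eq_restrict_add_singleton:
  assumes "dom P = insert a D"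
  shows "P = P |` D ++ [a \<mapsto> the (P a)]"
proof
  fix i
  obtain y where "P a = Some y"
    using assms by blast
  then show "P i = (P |` D ++ [a \<mapsto> the (P a)]) i"
    using assms by (cases "i = a") (auto simp: map_add_def restrict_map_def)
qed

section \<open>Profiles in which every ballot of a family occurs once\<close>

lemma each_once_intro:
  assumes "bij_betw (\<lambda>i. the (A i)) (dom A) X" and "X \<noteq> {}" and "{} \<notin> X"
    and "finite (dom A)" and "0 \<notin> dom A"
  shows "each_once X A"
proof -
  have "the (A i) \<in> X" if "i \<in> dom A" for i
    using assms(1) that by (rule bij_betw_apply)
  moreover have "dom A \<noteq> {}"
    using assms(1,2) by (auto simp: bij_betw_def)
  ultimately show ?thesis
    using assms unfolding each_once_def is_profile_def by metis
qed

lemma each_once_is_profile: "each_once X A \<Longrightarrow> is_profile A"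
  by (simp add: each_once_def)

lemma each_once_ballot_mem: "each_once X A \<Longrightarrow> i \<in> dom A \<Longrightarrow> the (A i) \<in> X"
  unfolding each_once_def by (metis bij_betwE)

lemma each_once_nonempty: "each_once X A \<Longrightarrow> X \<noteq> {}"
  unfolding each_once_def is_profile_def bij_betw_def by blast

lemma each_once_empty_notin: "each_once X A \<Longrightarrow> {} \<notin> X"
  unfolding each_once_def is_profile_def bij_betw_def by auto

lemma each_once_obtain_voter:
  assumes "each_once X A" and "S \<in> X"
  obtains i where "i \<in> dom A" and "the (A i) = S"
  using assms unfolding each_once_def bij_betw_def by (metis imageE)

lemma each_once_single: "0 < i \<Longrightarrow> S \<noteq> {} \<Longrightarrow> each_once {S} [i \<mapsto> S]"
  by (simp add: each_once_def is_profile_single bij_betw_def)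

lemma ex_each_once:
  fixes X :: "'c::finite set set"
  assumes "X \<noteq> {}" and "{} \<notin> X"
  obtains A where "each_once X A"
proof -
  obtain h where h: "bij_betw h {1..card X} X"
    using ex_bij_betw_nat_finite_1[of X] by auto
  define A where "A i = (if i \<in> {1..card X} then Some (h i) else None)" for i
  have dom: "dom A = {1..card X}"
    by (auto simp: A_def dom_def)
  have "bij_betw (\<lambda>i. the (A i)) {1..card X} X \<longleftrightarrow> bij_betw h {1..card X} X"
    by (rule bij_betw_cong) (simp add: A_def)
  with h dom have b: "bij_betw (\<lambda>i. the (A i)) (dom A) X"
    by simp
  show thesis
    by (rule that[OF each_once_intro[OF b]]) (use assms in \<open>simp_all add: dom\<close>)
qed

lemma each_once_map_ballots:
  assumes A: "each_once X A" and g: "bij_betw g X Y" and "{} \<notin> Y"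
  shows "each_once Y (map_ballots g A)"
proof (rule each_once_intro)
  have "bij_betw (g \<circ> (\<lambda>i. the (A i))) (dom A) Y"
    using A g unfolding each_once_def by (blast intro: bij_betw_trans)
  moreover have "bij_betw (\<lambda>i. the (map_ballots g A i)) (dom A) Y \<longleftrightarrow>
      bij_betw (g \<circ> (\<lambda>i. the (A i))) (dom A) Y"
    by (rule bij_betw_cong) simp
  ultimately show "bij_betw (\<lambda>i. the (map_ballots g A i)) (dom (map_ballots g A)) Y"
    by simp
  show "Y \<noteq> {}"
    using each_once_nonempty[OF A] g by (auto simp: bij_betw_def)
qed (use assms each_once_is_profile[OF A] in \<open>simp_all add: is_profile_def\<close>)

lemma each_once_restrict:
  assumes A: "each_once X A" and "Y \<subseteq> X" and "Y \<noteq> {}"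
  shows "each_once Y (A |` {i. the (A i) \<in> Y})"
proof (rule each_once_intro)
  let ?D = "{i. the (A i) \<in> Y}"
  have b: "bij_betw (\<lambda>i. the (A i)) (dom A) X"
    using A by (simp add: each_once_def)
  have "bij_betw (\<lambda>i. the (A i)) (dom A \<inter> ?D) Y"
    unfolding bij_betw_def
  proof
    show "inj_on (\<lambda>i. the (A i)) (dom A \<inter> ?D)"
      using b by (meson bij_betw_def inf_le1 inj_on_subset)
    show "(\<lambda>i. the (A i)) ` (dom A \<inter> ?D) = Y"
    proof
      show "Y \<subseteq> (\<lambda>i. the (A i)) ` (dom A \<inter> ?D)"
      proof
        fix S assume "S \<in> Y"
        with A assms(2) obtain i where "i \<in> dom A" and "the (A i) = S"
          by (meson each_once_obtain_voter subsetD)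
        with \<open>S \<in> Y\<close> show "S \<in> (\<lambda>i. the (A i)) ` (dom A \<inter> ?D)"
          by blast
      qed
    qed auto
  qed
  moreover have "bij_betw (\<lambda>i. the ((A |` ?D) i)) (dom A \<inter> ?D) Y \<longleftrightarrow>
      bij_betw (\<lambda>i. the (A i)) (dom A \<inter> ?D) Y"
    by (rule bij_betw_cong) simp
  ultimately show "bij_betw (\<lambda>i. the ((A |` ?D) i)) (dom (A |` ?D)) Y"
    by simp
qed (use assms each_once_is_profile[OF A] each_once_empty_notin[OF A] in \<open>auto simp: is_profile_def\<close>)

section \<open>Ballots of a fixed size and permutations of the candidates\<close>

lemma image_card_sets_bij:
  fixes \<tau> :: "'a \<Rightarrow> 'a"
  assumes "bij \<tau>"
  shows "(`) \<tau> ` {S. card S = r \<and> P S} = {S. card S = r \<and> P (\<tau> -` S)}"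
proof -
  have card: "card (\<tau> ` S) = card S" for S
    using assms by (meson bij_is_inj card_image inj_on_subset subset_UNIV)
  have vimage: "\<tau> -` (\<tau> ` S) = S" and image: "\<tau> ` (\<tau> -` S) = S" for S
    using assms by (simp_all add: bij_is_inj bij_is_surj inj_vimage_image_eq surj_image_vimage_eq)
  show ?thesis
  proof
    show "(`) \<tau> ` {S. card S = r \<and> P S} \<subseteq> {S. card S = r \<and> P (\<tau> -` S)}"
      by (auto simp: card vimage)
    show "{S. card S = r \<and> P (\<tau> -` S)} \<subseteq> (`) \<tau> ` {S. card S = r \<and> P S}"
    proof
      fix S assume "S \<in> {S. card S = r \<and> P (\<tau> -` S)}"
      moreover have "card (\<tau> -` S) = card S"
        by (metis card image)
      ultimately have "\<tau> -` S \<in> {S. card S = r \<and> P S}"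
        by simp
      then show "S \<in> (`) \<tau> ` {S. card S = r \<and> P S}"
        using image by (metis image_eqI)
    qed
  qed
qed

lemma image_card_sets_fixing:
  fixes \<tau> :: "'a \<Rightarrow> 'a"
  assumes "bij \<tau>" and "\<tau> x = x"
  shows "(`) \<tau> ` {S. card S = r \<and> P (x \<in> S)} = {S. card S = r \<and> P (x \<in> S)}"
  using assms by (simp add: image_card_sets_bij)

lemma bij_betw_image_sets: "bij \<tau> \<Longrightarrow> bij_betw ((`) \<tau>) X ((`) \<tau> ` X)"
  by (metis bij_is_inj inj_on_image inj_on_imp_bij_betw inj_on_subset subset_UNIV)

lemma card_sets_with_nonempty:
  fixes x :: "'c::finite"
  assumes "1 \<le> r" and "r \<le> card (UNIV :: 'c set)"
  shows "{S. card S = r \<and> x \<in> S} \<noteq> {}"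
proof -
  have "r - 1 \<le> card (- {x})"
    using assms by (simp add: Compl_eq_Diff_UNIV card_Diff_singleton)
  then obtain T where "T \<subseteq> - {x}" and "card T = r - 1"
    by (meson obtain_subset_with_card_n)
  then have "card (insert x T) = r"
    using assms by (auto simp: finite_subset)
  then show ?thesis
    by blast
qed

lemma card_sets_without_nonempty:
  fixes x :: "'c::finite"
  assumes "r < card (UNIV :: 'c set)"
  shows "{S. card S = r \<and> x \<notin> S} \<noteq> {}"
proof -
  have "r \<le> card (- {x})"
    using assms by (simp add: Compl_eq_Diff_UNIV card_Diff_singleton)
  then obtain T where "T \<subseteq> - {x}" and "card T = r"
    by (meson obtain_subset_with_card_n)
  then show ?thesis
    by blast
qed

lemma ex_each_once_with:
  fixes x :: "'c::finite"
  assumes "1 \<le> r" and "r \<le> card (UNIV :: 'c set)"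
  obtains A where "each_once {S. card S = r \<and> x \<in> S} A"
  by (rule ex_each_once[OF card_sets_with_nonempty[OF assms]]) (use \<open>1 \<le> r\<close> that in auto)

lemma ex_each_once_without:
  fixes x :: "'c::finite"
  assumes "1 \<le> r" and "r < card (UNIV :: 'c set)"
  obtains A where "each_once {S. card S = r \<and> x \<notin> S} A"
  by (rule ex_each_once[OF card_sets_without_nonempty[OF assms(2)]]) (use \<open>1 \<le> r\<close> that in auto)

lemma card_Diff1_less_nonempty:
  assumes "z \<in> T" and "2 \<le> card T"
  shows "card (T - {z}) < card T" and "T - {z} \<noteq> {}"
proof -
  have "finite T"
    using assms(2) by (intro card_ge_0_finite) simp
  with assms show "card (T - {z}) < card T"
    by (simp add: card_Diff1_less)
  have "card (T - {z}) = card T - 1"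
    using assms(1) by simp
  with assms(2) show "T - {z} \<noteq> {}"
    by fastforce
qed

lemma bij_betw_Diff_singleton:
  fixes x :: "'c::finite"
  shows "bij_betw (\<lambda>S. S - {x}) {S. card S = Suc r \<and> x \<in> S} {S. card S = r \<and> x \<notin> S}"
proof (rule bij_betw_byWitness[where f' = "insert x"])
  show "(\<lambda>S. S - {x}) ` {S. card S = Suc r \<and> x \<in> S} \<subseteq> {S. card S = r \<and> x \<notin> S}"
    by (auto simp: card_Diff_singleton_if)
qed (auto simp: card_insert_if)

lemma ex_bij_image_pair:
  fixes A B A' B' :: "'c::finite set"
  assumes "A \<inter> B = {}" and "A' \<inter> B' = {}" and "card A = card A'" and "card B = card B'"
  obtains \<tau> where "bij \<tau>" and "\<tau> ` A = A'" and "\<tau> ` B = B'"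
proof -
  let ?C = "- (A \<union> B)" and ?C' = "- (A' \<union> B')"
  have "card (A \<union> B) = card (A' \<union> B')"
    using assms by (simp add: card_Un_disjoint)
  then have "card ?C = card ?C'"
    by (simp add: Compl_eq_Diff_UNIV card_Diff_subset)
  then obtain j where j: "bij_betw j ?C ?C'"
    by (metis finite_same_card_bij finite)
  obtain g where g: "bij_betw g A A'"
    using assms(3) by (metis finite_same_card_bij finite)
  obtain h where h: "bij_betw h B B'"
    using assms(4) by (metis finite_same_card_bij finite)
  define \<tau> where "\<tau> y = (if y \<in> A then g y else if y \<in> B then h y else j y)" for y
  have A: "bij_betw \<tau> A A'"
    using g by (simp add: \<tau>_def cong: bij_betw_cong)
  have B: "bij_betw \<tau> B B'"
  proof -
    have "bij_betw \<tau> B B' \<longleftrightarrow> bij_betw h B B'"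
      using assms(1) by (intro bij_betw_cong) (auto simp: \<tau>_def)
    with h show ?thesis
      by simp
  qed
  have C: "bij_betw \<tau> ?C ?C'"
  proof -
    have "bij_betw \<tau> ?C ?C' \<longleftrightarrow> bij_betw j ?C ?C'"
      by (intro bij_betw_cong) (auto simp: \<tau>_def)
    with j show ?thesis
      by simp
  qed
  have "bij_betw \<tau> (A \<union> B \<union> ?C) (A' \<union> B' \<union> ?C')"
    using A B C assms(2) by (intro bij_betw_combine) auto
  moreover have "A \<union> B \<union> ?C = UNIV" and "A' \<union> B' \<union> ?C' = UNIV"
    by auto
  ultimately have "bij \<tau>"
    by simp
  then show thesis
    using bij_betw_imp_surj_on[OF A] bij_betw_imp_surj_on[OF B] by (rule that)
qed

section \<open>Anonymity and neutrality\<close>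

lemma anonymous_each_once_eq:
  assumes "anonymous f" and A: "each_once X A" and B: "each_once X B"
  shows "f A = f B"
proof -
  have a: "bij_betw (\<lambda>i. the (A i)) (dom A) X" and b: "bij_betw (\<lambda>i. the (B i)) (dom B) X"
    using A B by (auto simp: each_once_def)
  define \<pi> where "\<pi> = inv_into (dom B) (\<lambda>i. the (B i)) \<circ> (\<lambda>i. the (A i))"
  have \<pi>: "bij_betw \<pi> (dom A) (dom B)"
    unfolding \<pi>_def using a b by (blast intro: bij_betw_trans bij_betw_inv_into)
  have "B (\<pi> i) = A i" if "i \<in> dom A" for i
  proof -
    have "the (A i) \<in> (\<lambda>i. the (B i)) ` dom B"
      using a b that by (auto simp: bij_betw_def)
    then have "the (B (\<pi> i)) = the (A i)"
      unfolding \<pi>_def o_def by (rule f_inv_into_f)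
    moreover have "\<pi> i \<in> dom B"
      using \<pi> that by (metis bij_betwE)
    ultimately show ?thesis
      using that by (metis domD option.sel)
  qed
  then show ?thesis
    using assms \<pi> unfolding anonymous_def each_once_def by metis
qed

lemma anonymous_single_ballot:
  assumes "anonymous f" and "0 < i" and "0 < j" and "S \<noteq> {}"
  shows "f [i \<mapsto> S] = f [j \<mapsto> S]"
  using assms(1) each_once_single[OF assms(2,4)] each_once_single[OF assms(3,4)]
  by (rule anonymous_each_once_eq)

lemma neutral_map_ballots:
  assumes "neutral f" and "is_profile A" and "bij \<tau>"
  shows "f (map_ballots ((`) \<tau>) A) = (`) \<tau> ` f A"
  using assms unfolding neutral_def map_ballots_def by simp

lemma neutral_each_once:
  assumes "anonymous f" and "neutral f" and "bij \<tau>"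
    and A: "each_once X A" and B: "each_once ((`) \<tau> ` X) B"
  shows "f B = (`) \<tau> ` f A"
proof -
  have "{} \<notin> (`) \<tau> ` X"
    using each_once_empty_notin[OF A] by auto
  with A bij_betw_image_sets[OF \<open>bij \<tau>\<close>]
  have "each_once ((`) \<tau> ` X) (map_ballots ((`) \<tau>) A)"
    by (rule each_once_map_ballots)
  with \<open>anonymous f\<close> B have "f B = f (map_ballots ((`) \<tau>) A)"
    by (rule anonymous_each_once_eq)
  also have "\<dots> = (`) \<tau> ` f A"
    by (rule neutral_map_ballots[OF assms(2) each_once_is_profile[OF A] assms(3)])
  finally show ?thesis .
qed

lemma neutral_each_once_transfer:
  fixes f :: "'c::finite profile \<Rightarrow> 'c set set"
  assumes "anonymous f" and "neutral f" and "bij \<tau>"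
    and B: "each_once ((`) \<tau> ` X) B" and Y: "\<And>A. each_once X A \<Longrightarrow> f A = Y"
  shows "f B = (`) \<tau> ` Y"
proof -
  have "X \<noteq> {}" and "{} \<notin> X"
    using each_once_nonempty[OF B] each_once_empty_notin[OF B] by auto
  then obtain A where A: "each_once X A"
    by (rule ex_each_once)
  then show ?thesis
    using neutral_each_once[OF assms(1-3) A B] Y by simp
qed

lemma winners_image_closed:
  assumes "anonymous f" and "neutral f" and "each_once X A"
    and "bij \<tau>" and "(`) \<tau> ` X = X" and "W \<in> f A"
  shows "\<tau> ` W \<in> f A"
proof -
  have "each_once ((`) \<tau> ` X) A"
    using assms(3,5) by simp
  then have "f A = (`) \<tau> ` f A"
    by (rule neutral_each_once[OF assms(1,2,4,3)])
  with \<open>W \<in> f A\<close> show ?thesis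
    by blast
qed

lemma each_once_symmetric_winners:
  fixes f :: "'c::finite profile \<Rightarrow> 'c set set"
  assumes "abc_rule k f" and "anonymous f" and "neutral f" and A: "each_once X A"
    and sym: "\<And>\<tau>. bij \<tau> \<Longrightarrow> (`) \<tau> ` X = X"
  shows "f A = committees k"
proof
  have "is_profile A"
    using A by (rule each_once_is_profile)
  with \<open>abc_rule k f\<close> obtain W where W: "W \<in> f A" and "f A \<subseteq> committees k"
    by (auto simp: abc_rule_def)
  then show "f A \<subseteq> committees k"
    by simp
  show "committees k \<subseteq> f A"
  proof
    fix W' :: "'c set" assume "W' \<in> committees k"
    with W \<open>f A \<subseteq> committees k\<close> have "card W = card W'"
      by (auto simp: committees_def)
    then obtain \<tau> where "bij \<tau>" and "\<tau> ` W = W'"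
      by (rule ex_bij_image_pair[OF Int_empty_left Int_empty_left refl])
    with winners_image_closed[OF assms(2,3) A _ sym W] show "W' \<in> f A"
      by blast
  qed
qed

lemma each_once_winners_fixing:
  fixes x :: "'c::finite" and W W' :: "'c set"
  assumes "anonymous f" and "neutral f" and "each_once X A"
    and sym: "\<And>\<tau>. bij \<tau> \<Longrightarrow> \<tau> x = x \<Longrightarrow> (`) \<tau> ` X = X"
    and "W \<in> f A" and "card W' = card W" and "x \<in> W' \<longleftrightarrow> x \<in> W"
  shows "W' \<in> f A"
proof -
  have "card (W - {x}) = card (W' - {x})"
    using assms(6,7) by (cases "x \<in> W") auto
  then obtain \<tau> where "bij \<tau>" and \<tau>x: "\<tau> ` {x} = {x}" and \<tau>W: "\<tau> ` (W - {x}) = W' - {x}"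
    by (rule ex_bij_image_pair[OF Diff_disjoint Diff_disjoint refl])
  have "\<tau> ` W = \<tau> ` (W \<inter> {x}) \<union> \<tau> ` (W - {x})"
    by (metis Int_Diff_Un image_Un)
  also have "\<dots> = W'"
    using \<tau>x \<tau>W assms(7) by auto
  moreover have "(`) \<tau> ` X = X"
    using sym \<open>bij \<tau>\<close> \<tau>x by simp
  then have "\<tau> ` W \<in> f A"
    using winners_image_closed[OF assms(1-3) \<open>bij \<tau>\<close>] assms(5) by simp
  ultimately show ?thesis
    by simp
qed

lemma each_once_winners_membership:
  fixes f :: "'c::finite profile \<Rightarrow> 'c set set"
  assumes "anonymous f" and "neutral f" and "abc_rule k f"
    and A: "each_once {S. card S = r \<and> P (x \<in> S)} A"
    and "W \<in> f A" and "W' \<in> committees k" and "x \<in> W' \<longleftrightarrow> x \<in> W"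
  shows "W' \<in> f A"
proof (rule each_once_winners_fixing[OF assms(1,2) A _ \<open>W \<in> f A\<close> _ assms(7)])
  show "(`) \<tau> ` {S. card S = r \<and> P (x \<in> S)} = {S. card S = r \<and> P (x \<in> S)}"
    if "bij \<tau>" and "\<tau> x = x" for \<tau>
    using that by (rule image_card_sets_fixing)
  have "f A \<subseteq> committees k"
    using assms(3) each_once_is_profile[OF A] by (simp add: abc_rule_def)
  with assms(5,6) show "card W' = card W"
    by (auto simp: committees_def)
qed

section \<open>Consistency and independence of losers\<close>

lemma consistent_Inter_single_ballots:
  assumes "consistent f" and "is_profile P" and "\<And>i. i \<in> dom P \<Longrightarrow> W \<in> f [i \<mapsto> the (P i)]"
  shows "f P = (\<Inter>i\<in>dom P. f [i \<mapsto> the (P i)])"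
proof -
  have "finite (dom P)" and "dom P \<noteq> {}"
    using assms(2) by (auto simp: is_profile_def)
  then show ?thesis
    using assms(2,3)
  proof (induction "dom P" arbitrary: P rule: finite_ne_induct)
    case (singleton a)
    then have dom: "dom P = {a}"
      by simp
    have "f P = f [a \<mapsto> the (P a)]"
      using map_eq_singleton[OF dom] by (rule arg_cong)
    then show ?case
      by (simp only: dom INF_insert INF_empty inf_top.right_neutral)
  next
    case (insert a D)
    then have dom: "dom P = insert a D"
      by simp
    let ?Q = "P |` D"
    have "is_profile ?Q"
      using insert.prems(1) dom \<open>D \<noteq> {}\<close> by (auto simp: is_profile_def)
    moreover have "dom ?Q = D"
      using dom by auto
    ultimately have "f ?Q = (\<Inter>i\<in>dom ?Q. f [i \<mapsto> the (?Q i)])"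
      using insert.prems(2) dom by (intro insert.hyps(4)) auto
    also have "\<dots> = (\<Inter>i\<in>D. f [i \<mapsto> the (P i)])"
      using \<open>dom ?Q = D\<close> by (intro INF_cong) auto
    finally have Q: "f ?Q = (\<Inter>i\<in>D. f [i \<mapsto> the (P i)])" .
    have "a \<in> dom P"
      using dom by simp
    with insert.prems(1) have single: "is_profile [a \<mapsto> the (P a)]"
      by (intro is_profile_single is_profile_voter_pos is_profile_ballot_nonempty)
    have "W \<in> f ?Q" and "W \<in> f [a \<mapsto> the (P a)]"
      using Q insert.prems(2) dom by auto
    then have "f (?Q ++ [a \<mapsto> the (P a)]) = f ?Q \<inter> f [a \<mapsto> the (P a)]"
      using \<open>is_profile ?Q\<close> single \<open>dom ?Q = D\<close> \<open>a \<notin> D\<close>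
      by (intro assms(1)[unfolded consistent_def, rule_format]) auto
    moreover have "f P = f (?Q ++ [a \<mapsto> the (P a)])"
      using map_eq_restrict_add_singleton[OF dom] by (rule arg_cong)
    ultimately show ?case
      using Q dom by auto
  qed
qed

lemma indep_losers_map_ballots:
  assumes "indep_losers f" and "is_profile A" and "W \<in> f A"
    and "\<And>i. i \<in> dom A \<Longrightarrow> g (the (A i)) \<subseteq> the (A i) \<and> g (the (A i)) \<noteq> {} \<and>
                             W \<inter> g (the (A i)) = W \<inter> the (A i)"
  shows "W \<in> f (map_ballots g A)"
proof -
  have "is_profile (map_ballots g A)"
    by (rule is_profile_map_ballots[OF assms(2)]) (use assms(4) in blast)
  moreover have "\<forall>i\<in>dom A. the (map_ballots g A i) \<subseteq> the (A i) \<and>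
      W \<inter> the (map_ballots g A i) = W \<inter> the (A i)"
  proof
    fix i assume "i \<in> dom A"
    then show "the (map_ballots g A i) \<subseteq> the (A i) \<and> W \<inter> the (map_ballots g A i) = W \<inter> the (A i)"
      using assms(4)[of i] by (simp only: the_map_ballots)
  qed
  ultimately have "is_profile A \<and> is_profile (map_ballots g A) \<and> dom A = dom (map_ballots g A) \<and>
      (\<forall>i\<in>dom A. the (map_ballots g A i) \<subseteq> the (A i) \<and>
         W \<inter> the (map_ballots g A i) = W \<inter> the (A i)) \<and> W \<in> f A"
    using assms(2,3) dom_map_ballots[of g A] by blast
  then show ?thesis
    by (rule assms(1)[unfolded indep_losers_def, rule_format])
qed

lemma indep_losers_remove_loser:
  fixes x :: "'c::finite"
  assumes "indep_losers f" and "anonymous f" and "1 \<le> r"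
    and A: "each_once {S. card S = Suc r \<and> x \<in> S} A" and "W \<in> f A" and "x \<notin> W"
    and B: "each_once {S. card S = r \<and> x \<notin> S} B"
  shows "W \<in> f B"
proof -
  have "{} \<notin> {S. card S = r \<and> x \<notin> S}"
    using \<open>1 \<le> r\<close> by auto
  with A bij_betw_Diff_singleton
  have A': "each_once {S. card S = r \<and> x \<notin> S} (map_ballots (\<lambda>S. S - {x}) A)"
    by (rule each_once_map_ballots)
  have "W \<in> f (map_ballots (\<lambda>S. S - {x}) A)"
  proof (rule indep_losers_map_ballots)
    fix i assume "i \<in> dom A"
    then have "card (the (A i)) = Suc r" and "x \<in> the (A i)"
      using each_once_ballot_mem[OF A] by auto
    then have "card (the (A i) - {x}) = r"
      by simp
    then have "the (A i) - {x} \<noteq> {}"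
      using \<open>1 \<le> r\<close> by (metis card.empty not_one_le_zero)
    with \<open>x \<notin> W\<close> show "the (A i) - {x} \<subseteq> the (A i) \<and> the (A i) - {x} \<noteq> {} \<and>
        W \<inter> (the (A i) - {x}) = W \<inter> the (A i)"
      by auto
  qed (use assms each_once_is_profile[OF A] in simp_all)
  then show ?thesis
    using anonymous_each_once_eq[OF \<open>anonymous f\<close> A' B] by simp
qed

lemma single_ballot_winner_by_shrinking:
  assumes "consistent f" and "indep_losers f" and "anonymous f"
    and A: "each_once X A" and "W \<in> f A" and "S \<in> X" and "g S = S" and "0 < i"
    and shrink: "\<And>T. T \<in> X \<Longrightarrow> g T \<subseteq> T \<and> g T \<noteq> {} \<and> W \<inter> g T = W \<inter> T"
    and common: "\<And>T j. T \<in> X \<Longrightarrow> 0 < j \<Longrightarrow> W' \<in> f [j \<mapsto> g T]"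
  shows "W \<in> f [i \<mapsto> S]"
proof -
  have P: "is_profile A"
    using A by (rule each_once_is_profile)
  have "W \<in> f (map_ballots g A)"
    using assms(2) P \<open>W \<in> f A\<close> by (rule indep_losers_map_ballots)
      (use shrink each_once_ballot_mem[OF A] in blast)
  also have "f (map_ballots g A) = (\<Inter>j\<in>dom (map_ballots g A). f [j \<mapsto> the (map_ballots g A j)])"
  proof (rule consistent_Inter_single_ballots[OF assms(1)])
    show "is_profile (map_ballots g A)"
      by (rule is_profile_map_ballots[OF P]) (use shrink each_once_ballot_mem[OF A] in blast)
    fix j assume "j \<in> dom (map_ballots g A)"
    then show "W' \<in> f [j \<mapsto> the (map_ballots g A j)]"
      using common each_once_ballot_mem[OF A] is_profile_voter_pos[OF P] by simp
  qed
  finally have "W \<in> f [j \<mapsto> g (the (A j))]" if "j \<in> dom A" for j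
    using that by simp
  moreover obtain i0 where "i0 \<in> dom A" and "the (A i0) = S"
    using A \<open>S \<in> X\<close> by (rule each_once_obtain_voter)
  ultimately have "W \<in> f [i0 \<mapsto> S]"
    using \<open>g S = S\<close> by force
  moreover have "S \<noteq> {}"
    using shrink[OF \<open>S \<in> X\<close>] \<open>g S = S\<close> by simp
  ultimately show ?thesis
    using anonymous_single_ballot[OF assms(3) \<open>0 < i\<close> is_profile_voter_pos[OF P \<open>i0 \<in> dom A\<close>]] by simp
qed

section \<open>Separating ballot sizes\<close>

definition separates :: "nat \<Rightarrow> ('c profile \<Rightarrow> 'c set set) \<Rightarrow> nat \<Rightarrow> 'c \<Rightarrow> bool" where
  "separates k f r x \<longleftrightarrow>
     (\<forall>A. prof_with x r A \<longrightarrow> f A = {W \<in> committees k. x \<in> W}) \<and>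
     (\<forall>A. prof_without x r A \<longrightarrow> f A = {W \<in> committees k. x \<notin> W})"

lemma separates_bij:
  fixes f :: "'c::finite profile \<Rightarrow> 'c set set"
  assumes "anonymous f" and "neutral f" and "bij \<tau>" and sep: "separates k f r x"
  shows "separates k f r (\<tau> x)"
proof -
  have image: "(`) \<tau> ` {S. card S = n \<and> P (x \<in> S)} = {S. card S = n \<and> P (\<tau> x \<in> S)}" for n P
    using assms(3) by (simp add: image_card_sets_bij)
  have committees: "(`) \<tau> ` {W \<in> committees k. P (x \<in> W)} = {W \<in> committees k. P (\<tau> x \<in> W)}" for P
    using image[of k P] by (simp add: committees_def)
  show ?thesis
    unfolding separates_def prof_with_def prof_without_def
  proof (intro conjI allI impI)
    fix B assume "each_once {S. card S = r \<and> \<tau> x \<in> S} B"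
    then have "each_once ((`) \<tau> ` {S. card S = r \<and> x \<in> S}) B"
      using image[of r "\<lambda>b. b"] by simp
    then have "f B = (`) \<tau> ` {W \<in> committees k. x \<in> W}"
      by (rule neutral_each_once_transfer[OF assms(1-3)])
        (use sep in \<open>simp add: separates_def prof_with_def\<close>)
    then show "f B = {W \<in> committees k. \<tau> x \<in> W}"
      using committees[of "\<lambda>b. b"] by simp
  next
    fix B assume "each_once {S. card S = r \<and> \<tau> x \<notin> S} B"
    then have "each_once ((`) \<tau> ` {S. card S = r \<and> x \<notin> S}) B"
      using image[of r Not] by simp
    then have "f B = (`) \<tau> ` {W \<in> committees k. x \<notin> W}"
      by (rule neutral_each_once_transfer[OF assms(1-3)])
        (use sep in \<open>simp add: separates_def prof_without_def\<close>)
    then show "f B = {W \<in> committees k. \<tau> x \<notin> W}"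
      using committees[of Not] by simp
  qed
qed

lemma separates_any:
  fixes f :: "'c::finite profile \<Rightarrow> 'c set set"
  assumes "anonymous f" and "neutral f" and "separates k f r x"
  shows "separates k f r y"
proof -
  have "card {x} = card {y}"
    by simp
  then obtain \<tau> where "bij \<tau>" and "\<tau> ` {x} = {y}"
    by (rule ex_bij_image_pair[OF Int_empty_right Int_empty_right _ refl])
  then show ?thesis
    using separates_bij[OF assms(1,2) \<open>bij \<tau>\<close> assms(3)] by simp
qed

section \<open>Without a separating ballot size the rule is trivial\<close>

locale abc_axioms =
  fixes f :: "'c::finite profile \<Rightarrow> 'c set set" and k :: nat
  assumes abc: "abc_rule k f" and anonymous: "anonymous f" and neutral: "neutral f"
    and consistent: "consistent f" and indep_losers: "indep_losers f"
    and k_less: "k < card (UNIV :: 'c set)"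
begin

lemma winners_subset_committees: "is_profile A \<Longrightarrow> f A \<subseteq> committees k"
  using abc by (simp add: abc_rule_def)

lemma winners_nonempty: "is_profile A \<Longrightarrow> f A \<noteq> {}"
  using abc by (simp add: abc_rule_def)

lemma ex_committee_without: "\<exists>W\<in>committees k. (x::'c) \<notin> W"
  using card_sets_without_nonempty[OF k_less, of x] by (auto simp: committees_def)

lemma each_once_card_sets_tie:
  assumes "each_once {S. card S = r} C"
  shows "f C = committees k"
  using abc anonymous neutral assms
  by (rule each_once_symmetric_winners) (use image_card_sets_bij[of _ r "\<lambda>_. True"] in simp)

lemma with_without_ties_if_meet:
  assumes "1 \<le> r" and "r < card (UNIV :: 'c set)"
    and A: "each_once {S. card S = r \<and> x \<in> S} A" and B: "each_once {S. card S = r \<and> x \<notin> S} B"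
    and "f A \<inter> f B \<noteq> {}"
  shows "f A = committees k" and "f B = committees k"
proof -
  let ?with = "{S. card S = r \<and> x \<in> S}" and ?without = "{S. card S = r \<and> x \<notin> S}"
  have "{S::'c set. card S = r} \<noteq> {}"
    using each_once_nonempty[OF A] by blast
  moreover have "{} \<notin> {S::'c set. card S = r}"
    using \<open>1 \<le> r\<close> by auto
  ultimately obtain C where C: "each_once {S::'c set. card S = r} C"
    by (rule ex_each_once)
  let ?A = "C |` {i. the (C i) \<in> ?with}" and ?B = "C |` {i. the (C i) \<in> ?without}"
  have A': "each_once ?with ?A"
    by (rule each_once_restrict[OF C _ each_once_nonempty[OF A]]) blast
  have B': "each_once ?without ?B"
    by (rule each_once_restrict[OF C _ each_once_nonempty[OF B]]) blast
  have "C = ?A ++ ?B"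
  proof
    fix i
    show "C i = (?A ++ ?B) i"
    proof (cases "C i")
      case (Some S)
      then have "card S = r"
        using each_once_ballot_mem[OF C] by fastforce
      with Some show ?thesis
        by (cases "x \<in> S") (simp_all add: restrict_map_def map_add_def)
    qed (simp add: restrict_map_def map_add_def)
  qed
  moreover have "f ?A = f A" and "f ?B = f B"
    using anonymous_each_once_eq[OF anonymous] A A' B B' by blast+
  moreover have "f (?A ++ ?B) = f ?A \<inter> f ?B"
    using each_once_is_profile[OF A'] each_once_is_profile[OF B'] \<open>f A \<inter> f B \<noteq> {}\<close> calculation(2,3)
    by (intro consistent[unfolded consistent_def, rule_format]) auto
  ultimately have "committees k = f A \<inter> f B"
    using each_once_card_sets_tie[OF C] by simp
  moreover have "f A \<subseteq> committees k" and "f B \<subseteq> committees k"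
    using winners_subset_committees each_once_is_profile A B by blast+
  ultimately show "f A = committees k" and "f B = committees k"
    by blast+
qed

lemma winners_eq_membership_class:
  assumes A: "each_once {S. card S = r \<and> P (x \<in> S)} A" and "\<And>W. W \<in> f A \<Longrightarrow> (x \<in> W) = b"
  shows "f A = {W \<in> committees k. (x \<in> W) = b}"
proof
  show "f A \<subseteq> {W \<in> committees k. (x \<in> W) = b}"
    using winners_subset_committees[OF each_once_is_profile[OF A]] assms(2) by blast
  obtain W0 where "W0 \<in> f A"
    using winners_nonempty[OF each_once_is_profile[OF A]] by blast
  then show "{W \<in> committees k. (x \<in> W) = b} \<subseteq> f A"
    using each_once_winners_membership[OF anonymous neutral abc A] assms(2) by blast
qed

lemma with_profile_winner_without:
  assumes "\<not> separates k f r x" and "1 \<le> r" and "r < card (UNIV :: 'c set)"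
    and A: "each_once {S. card S = r \<and> x \<in> S} A"
  shows "\<exists>W\<in>f A. x \<notin> W"
proof (rule ccontr)
  assume "\<not> (\<exists>W\<in>f A. x \<notin> W)"
  then have x_in: "\<And>W. W \<in> f A \<Longrightarrow> x \<in> W"
    by blast
  obtain B where B: "each_once {S. card S = r \<and> x \<notin> S} B"
    using assms(2,3) by (rule ex_each_once_without)
  have fA: "f A = {W \<in> committees k. x \<in> W}"
    using winners_eq_membership_class[OF A, of True] x_in by simp
  have "f A \<inter> f B = {}"
  proof (rule ccontr)
    assume "f A \<inter> f B \<noteq> {}"
    then have "f A = committees k"
      using with_without_ties_if_meet(1)[OF assms(2,3) A B] by blast
    then show False
      using ex_committee_without[of x] x_in by blast
  qed
  have fB: "f B = {W \<in> committees k. x \<notin> W}"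
    using winners_eq_membership_class[OF B, of False] \<open>f A \<inter> f B = {}\<close> fA
      winners_subset_committees[OF each_once_is_profile[OF B]] by auto
  have "separates k f r x"
    unfolding separates_def prof_with_def prof_without_def
  proof (intro conjI allI impI)
    show "f A' = {W \<in> committees k. x \<in> W}" if "each_once {S. card S = r \<and> x \<in> S} A'" for A'
      using anonymous_each_once_eq[OF anonymous that A] fA by simp
    show "f B' = {W \<in> committees k. x \<notin> W}" if "each_once {S. card S = r \<and> x \<notin> S} B'" for B'
      using anonymous_each_once_eq[OF anonymous that B] fB by simp
  qed
  with assms(1) show False ..
qed

lemma with_profile_tie_if_no_separation:
  assumes "1 \<le> r" and "r < card (UNIV :: 'c set)"
    and A: "each_once {S. card S = r \<and> x \<in> S} A"
    and no_sep: "\<And>r. 1 \<le> r \<Longrightarrow> r < card (UNIV :: 'c set) \<Longrightarrow> \<not> separates k f r x"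
  shows "f A = committees k"
proof -
  obtain B where B: "each_once {S. card S = r \<and> x \<notin> S} B"
    using assms(1,2) by (rule ex_each_once_without)
  have "1 \<le> Suc r" and "Suc r \<le> card (UNIV :: 'c set)"
    using assms(2) by simp_all
  then obtain A1 where A1: "each_once {S. card S = Suc r \<and> x \<in> S} A1"
    by (rule ex_each_once_with)
  obtain W where "W \<in> f A1" and "x \<notin> W"
  proof (cases "Suc r < card (UNIV :: 'c set)")
    case True
    with \<open>1 \<le> Suc r\<close> show thesis
      using with_profile_winner_without[OF no_sep[OF \<open>1 \<le> Suc r\<close> True] \<open>1 \<le> Suc r\<close> True A1] that
      by blast
  next
    case False
    with assms(2) have "Suc r = card (UNIV :: 'c set)"
      by simp
    then have "{S. card S = Suc r \<and> x \<in> S} = {S::'c set. card S = Suc r}"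
      using card_eq_UNIV_imp_eq_UNIV[OF finite_UNIV] by force
    then have "f A1 = committees k"
      using A1 each_once_card_sets_tie by simp
    then show thesis
      using ex_committee_without[of x] that by blast
  qed
  then have "W \<in> f B"
    using indep_losers_remove_loser[OF indep_losers anonymous \<open>1 \<le> r\<close> A1] B by blast
  moreover obtain W0 where "W0 \<in> f A" and "x \<notin> W0"
    using with_profile_winner_without[OF no_sep[OF assms(1,2)] assms(1,2) A] by blast
  then have "W \<in> f A"
    using each_once_winners_membership[OF anonymous neutral abc, of r "\<lambda>b. b"] A \<open>x \<notin> W\<close>
      winners_subset_committees[OF each_once_is_profile[OF A1]] \<open>W \<in> f A1\<close> by blast
  ultimately show ?thesis
    using with_without_ties_if_meet(1)[OF assms(1,2) A B] by blast
qed

end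

text \<open>The situation reached when no ballot size separates any candidate.\<close>

locale abc_axioms_tied = abc_axioms f k for f :: "'c::finite profile \<Rightarrow> 'c set set" and k +
  assumes with_profile_tie: "\<And>x s A. 1 \<le> s \<Longrightarrow> s < card (UNIV :: 'c set) \<Longrightarrow>
      each_once {S. card S = s \<and> x \<in> S} A \<Longrightarrow> f A = committees k"
begin

lemma ex_with_profile_winner:
  assumes "1 \<le> card S" and "card S < card (UNIV :: 'c set)" and "W \<in> committees k"
  obtains A where "each_once {T. card T = card S \<and> x \<in> T} A" and "W \<in> f A"
proof -
  obtain A where A: "each_once {T. card T = card S \<and> x \<in> T} A"
    using assms(1,2) by (rule ex_each_once_with[OF _ less_imp_le])
  then have "f A = committees k"
    using assms(1,2) by (rule with_profile_tie[rotated 2])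
  with assms(3) have "W \<in> f A"
    by simp
  with A show thesis
    by (rule that)
qed

lemma single_ballot_winner_not_subset:
  assumes "2 \<le> card S" and "card S < card (UNIV :: 'c set)"
    and smaller: "\<And>T j. card T < card S \<Longrightarrow> 0 < j \<Longrightarrow> T \<noteq> {} \<Longrightarrow> f [j \<mapsto> T] = committees k"
    and "0 < i" and "W \<in> committees k" and "\<not> S \<subseteq> W"
  shows "W \<in> f [i \<mapsto> S]"
proof -
  obtain x where "x \<in> S" and "x \<notin> W"
    using assms(6) by blast
  let ?X = "{T. card T = card S \<and> x \<in> T}"
  have "1 \<le> card S"
    using assms(1) by simp
  then obtain A where A: "each_once ?X A" and "W \<in> f A"
    using assms(2,5) by (rule ex_with_profile_winner)
  have "S \<noteq> {}"
    using \<open>x \<in> S\<close> by blast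
  then have single: "is_profile [1 \<mapsto> S]"
    by (simp add: is_profile_single)
  then obtain W' where W': "W' \<in> f [1 \<mapsto> S]"
    using winners_nonempty by blast
  then have "W' \<in> committees k"
    using winners_subset_committees[OF single] by blast
  define g where "g T = (if T = S then S else T - {x})" for T
  have shrunk: "card (T - {x}) < card S" "T - {x} \<noteq> {}" if "T \<in> ?X" for T
    using card_Diff1_less_nonempty[of x T] that assms(1) by simp_all
  show ?thesis
  proof (rule single_ballot_winner_by_shrinking[OF consistent indep_losers anonymous A \<open>W \<in> f A\<close>,
        where g = g and W' = W'])
    show "S \<in> ?X" and "g S = S" and "0 < i"
      using \<open>x \<in> S\<close> assms(4) by (simp_all add: g_def)
    show "g T \<subseteq> T \<and> g T \<noteq> {} \<and> W \<inter> g T = W \<inter> T" if "T \<in> ?X" for T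
      using shrunk[OF that] \<open>x \<notin> W\<close> \<open>S \<noteq> {}\<close> unfolding g_def by auto
    show "W' \<in> f [j \<mapsto> g T]" if "T \<in> ?X" and "0 < j" for T j
    proof (cases "T = S")
      case True
      then show ?thesis
        using W' anonymous_single_ballot[OF anonymous \<open>0 < j\<close> zero_less_one \<open>S \<noteq> {}\<close>]
        by (simp add: g_def)
    next
      case False
      from shrunk[OF \<open>T \<in> ?X\<close>] \<open>0 < j\<close> have "f [j \<mapsto> T - {x}] = committees k"
        by (intro smaller)
      with False \<open>W' \<in> committees k\<close> show ?thesis
        by (simp add: g_def)
    qed
  qed
qed

lemma single_ballot_winner_subset:
  assumes "2 \<le> card S" and "card S < card (UNIV :: 'c set)"
    and smaller: "\<And>T j. card T < card S \<Longrightarrow> 0 < j \<Longrightarrow> T \<noteq> {} \<Longrightarrow> f [j \<mapsto> T] = committees k"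
    and "0 < i" and "W \<in> committees k" and "S \<subseteq> W"
  shows "W \<in> f [i \<mapsto> S]"
proof -
  obtain y where "y \<in> S"
    using assms(1) by fastforce
  let ?X = "{T. card T = card S \<and> y \<in> T}"
  have "1 \<le> card S"
    using assms(1) by simp
  then obtain A where A: "each_once ?X A" and "W \<in> f A"
    using assms(2,5) by (rule ex_with_profile_winner)
  \<comment> \<open>Since \<open>W'\<close> avoids \<open>y\<close>, the unshrunk ballots \<open>T \<subseteq> W\<close> fall under the non-subset case.\<close>
  obtain W' where "W' \<in> committees k" and "y \<notin> W'"
    using ex_committee_without by blast
  define z where "z T = (SOME z. z \<in> T - W)" for T
  define g where "g T = (if T \<subseteq> W then T else T - {z T})" for T
  have z: "z T \<in> T - W" if "\<not> T \<subseteq> W" for T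
    unfolding z_def using that by (metis Diff_eq_empty_iff ex_in_conv someI_ex)
  have shrunk: "card (T - {z T}) < card S" "T - {z T} \<noteq> {}" if "T \<in> ?X" and "\<not> T \<subseteq> W" for T
    using card_Diff1_less_nonempty[of "z T" T] z[OF that(2)] that(1) assms(1) by simp_all
  show ?thesis
  proof (rule single_ballot_winner_by_shrinking[OF consistent indep_losers anonymous A \<open>W \<in> f A\<close>,
        where g = g and W' = W'])
    show "S \<in> ?X" and "g S = S" and "0 < i"
      using \<open>y \<in> S\<close> assms(4,6) by (simp_all add: g_def)
    show "g T \<subseteq> T \<and> g T \<noteq> {} \<and> W \<inter> g T = W \<inter> T" if "T \<in> ?X" for T
      using shrunk[OF that] z that assms(1) by (auto simp: g_def)
    show "W' \<in> f [j \<mapsto> g T]" if "T \<in> ?X" and "0 < j" for T j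
    proof (cases "T \<subseteq> W")
      case True
      have "\<not> T \<subseteq> W'"
        using that(1) \<open>y \<notin> W'\<close> by auto
      with that have "W' \<in> f [j \<mapsto> T]"
        using single_ballot_winner_not_subset[OF _ _ _ _ \<open>W' \<in> committees k\<close>]
          assms(1,2) smaller by simp
      with True show ?thesis
        by (simp add: g_def)
    next
      case False
      from shrunk[OF that(1) False] \<open>0 < j\<close> have "f [j \<mapsto> T - {z T}] = committees k"
        by (intro smaller)
      with False \<open>W' \<in> committees k\<close> show ?thesis
        by (simp add: g_def)
    qed
  qed
qed

lemma single_ballot_tie_step:
  assumes "2 \<le> card S" and "card S < card (UNIV :: 'c set)"
    and smaller: "\<And>T j. card T < card S \<Longrightarrow> 0 < j \<Longrightarrow> T \<noteq> {} \<Longrightarrow> f [j \<mapsto> T] = committees k"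
    and "0 < i"
  shows "f [i \<mapsto> S] = committees k"
proof
  have "S \<noteq> {}"
    using assms(1) by auto
  with \<open>0 < i\<close> show "f [i \<mapsto> S] \<subseteq> committees k"
    by (intro winners_subset_committees is_profile_single)
  show "committees k \<subseteq> f [i \<mapsto> S]"
    using single_ballot_winner_subset[of S i] single_ballot_winner_not_subset[of S i] assms by blast
qed

lemma single_ballot_tie:
  assumes "0 < i" and "S \<noteq> {}"
  shows "f [i \<mapsto> S] = committees k"
  using assms
proof (induction "card S" arbitrary: S i rule: less_induct)
  case less
  have single: "each_once {S} [i \<mapsto> S]"
    using less.prems by (rule each_once_single)
  have "1 \<le> card S" and "card S \<le> card (UNIV :: 'c set)"
    using less.prems(2) card_mono[OF finite_UNIV subset_UNIV, of S] by (simp_all add: Suc_leI card_gt_0_iff)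
  then consider "card S = card (UNIV :: 'c set)" | "card S = 1" "card S < card (UNIV :: 'c set)"
    | "2 \<le> card S" "card S < card (UNIV :: 'c set)"
    by linarith
  then show ?case
  proof cases
    case 1
    then have "S = UNIV"
      by (simp add: card_eq_UNIV_imp_eq_UNIV)
    with single show ?thesis
      by (intro each_once_symmetric_winners[OF abc anonymous neutral]) (auto simp: bij_def)
  next
    case 2
    then obtain y where "S = {y}"
      by (auto simp: card_1_singleton_iff)
    then have "{T. card T = 1 \<and> y \<in> T} = {S}"
      by (auto simp: card_1_singleton_iff)
    with single have "each_once {T. card T = 1 \<and> y \<in> T} [i \<mapsto> S]"
      by simp
    moreover have "1 < card (UNIV :: 'c set)"
      using 2 by simp
    ultimately show ?thesis
      by (intro with_profile_tie) simp_all
  next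
    case 3
    have smaller: "f [j \<mapsto> T] = committees k" if "card T < card S" "0 < j" "T \<noteq> {}" for T j
      using less.hyps that by blast
    show ?thesis
      using 3 smaller less.prems(1) by (rule single_ballot_tie_step)
  qed
qed

lemma rule_is_trivial: "trivial_rule k f"
  unfolding trivial_rule_def
proof (intro allI impI)
  fix P :: "'c profile"
  assume P: "is_profile P"
  have single: "f [i \<mapsto> the (P i)] = committees k" if "i \<in> dom P" for i
    using is_profile_voter_pos[OF P that] is_profile_ballot_nonempty[OF P that]
    by (rule single_ballot_tie)
  obtain W :: "'c set" where "W \<in> committees k"
    using ex_committee_without[of undefined] by blast
  with P single have "f P = (\<Inter>i\<in>dom P. f [i \<mapsto> the (P i)])"
    by (intro consistent_Inter_single_ballots[OF consistent]) simp_all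
  also have "\<dots> = committees k"
    using P single by (auto simp: is_profile_def)
  finally show "f P = committees k" .
qed

end

theorem mainTheorem14:
  fixes f :: "('c::finite) profile \<Rightarrow> 'c set set" and k :: nat
  assumes "card (UNIV::'c set) \<ge> 2" and "1 \<le> k" and "k < card (UNIV::'c set)"
    and "abc_rule k f" and "\<not> trivial_rule k f"
    and "anonymous f" and "neutral f" and "consistent f"
    and "continuous_rule f" and "indep_losers f"
  shows "\<exists>r\<in>{1..card (UNIV::'c set) - 1}. \<forall>x::'c.
           (\<forall>A. prof_with x r A \<longrightarrow> f A = {W \<in> committees k. x \<in> W}) \<and>
           (\<forall>A. prof_without x r A \<longrightarrow> f A = {W \<in> committees k. x \<notin> W})"
proof (rule ccontr)
  assume no_r: "\<not> ?thesis"
  interpret abc_axioms f k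
    using assms by unfold_locales
  have no_sep: "\<not> separates k f r x" if "1 \<le> r" and "r < card (UNIV :: 'c set)" for r x
  proof
    assume "separates k f r x"
    then have "\<forall>y. separates k f r y"
      using separates_any[OF anonymous neutral] by blast
    moreover have "r \<in> {1..card (UNIV :: 'c set) - 1}"
      using that by auto
    ultimately show False
      using no_r unfolding separates_def by blast
  qed
  have with_profile_tie: "f A = committees k"
    if "1 \<le> s" and "s < card (UNIV :: 'c set)" and "each_once {S. card S = s \<and> x \<in> S} A" for x s A
    using that no_sep by (rule with_profile_tie_if_no_separation)
  interpret abc_axioms_tied f k
    by unfold_locales (fact with_profile_tie)
  have "trivial_rule k f"
    by (rule rule_is_trivial)
  with assms(5) show False ..
qed

end
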